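(* Let $G$ be a connected graph. If $G_{\rm SR}\cong K_1+(aK_2\cup bK_1)$ where either $a\ge 1$ and $b\ge 0$, or $a=0$ and $b\ge 2$, then $O_{\rm SR}(G)=\mathcal{N}$.
   Context: All graphs are finite, simple and undirected; $d(x,y)$ is the shortest-path distance. $aK_2\cup bK_1$ is the disjoint union of $a$ copies of $K_2$ and $b$ isolated vertices; the join $X+Y$ is obtained from the disjoint union of $X$ and $Y$ by adding all edges between $V(X)$ and $V(Y)$. A set $S\subseteq V(G)$ is a strong resolving set of a connected graph $G$ if for all distinct $x,y\in V(G)$ there exists $z\in S$ such that $x$ lies on a $y$–$z$ geodesic or $y$ lies on an $x$–$z$ geodesic. A vertex $u$ is maximally distant from $v$ if $d(u,v)\ge d(w,v)$ for every neighbor $w$ of $u$; $u,v$ are mutually maximally distant (MMD) if each is maximally distant from the other. The strong resolving graph $G_{\rm SR}$ has vertex set $\{x: x\text{ is MMD with some }y\}$ and edges exactly the MMD pairs. The Maker–Breaker strong resolving game on $G$: Maker and Breaker alternately select a not-yet-chosen vertex of $G$; Maker wins if the vertices he selects contain a strong resolving set of $G$, Breaker wins otherwise. In the M-game Maker moves first, in the B-game Breaker moves first. $O_{\rm SR}(G)=\mathcal{M}$ if Maker has a winning strategy in both games, $\mathcal{B}$ if Breaker has a winning strategy in both, and $\mathcal{N}$ if the first player has a winning strategy in each. *)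

theory Defs
  imports Main
begin

definition simple_graph :: "'a set \<Rightarrow> ('a \<Rightarrow> 'a \<Rightarrow> bool) \<Rightarrow> bool" where
  "simple_graph V E \<longleftrightarrow> finite V \<and> (\<forall>x y. E x y \<longrightarrow> x \<in> V \<and> y \<in> V)
     \<and> (\<forall>x y. E x y \<longrightarrow> E y x) \<and> (\<forall>x. \<not> E x x)"

fun is_walk :: "('a \<Rightarrow> 'a \<Rightarrow> bool) \<Rightarrow> 'a list \<Rightarrow> bool" where
  "is_walk E [] = False"
| "is_walk E [x] = True"
| "is_walk E (x # y # xs) = (E x y \<and> is_walk E (y # xs))"

definition walk_between :: "'a set \<Rightarrow> ('a \<Rightarrow> 'a \<Rightarrow> bool) \<Rightarrow> 'a \<Rightarrow> 'a \<Rightarrow> 'a list \<Rightarrow> bool" where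
  "walk_between V E x y xs \<longleftrightarrow> is_walk E xs \<and> set xs \<subseteq> V \<and> hd xs = x \<and> last xs = y"

definition connected_graph :: "'a set \<Rightarrow> ('a \<Rightarrow> 'a \<Rightarrow> bool) \<Rightarrow> bool" where
  "connected_graph V E \<longleftrightarrow> simple_graph V E \<and> V \<noteq> {}
     \<and> (\<forall>x\<in>V. \<forall>y\<in>V. \<exists>xs. walk_between V E x y xs)"

definition gdist :: "'a set \<Rightarrow> ('a \<Rightarrow> 'a \<Rightarrow> bool) \<Rightarrow> 'a \<Rightarrow> 'a \<Rightarrow> nat" where
  "gdist V E x y = (LEAST n. \<exists>xs. walk_between V E x y xs \<and> length xs = Suc n)"

definition on_geodesic :: "'a set \<Rightarrow> ('a \<Rightarrow> 'a \<Rightarrow> bool) \<Rightarrow> 'a \<Rightarrow> 'a \<Rightarrow> 'a \<Rightarrow> bool" where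
  "on_geodesic V E x y z \<longleftrightarrow> gdist V E y x + gdist V E x z = gdist V E y z"

definition strong_resolving_set :: "'a set \<Rightarrow> ('a \<Rightarrow> 'a \<Rightarrow> bool) \<Rightarrow> 'a set \<Rightarrow> bool" where
  "strong_resolving_set V E S \<longleftrightarrow> S \<subseteq> V \<and>
     (\<forall>x\<in>V. \<forall>y\<in>V. x \<noteq> y \<longrightarrow>
        (\<exists>z\<in>S. on_geodesic V E x y z \<or> on_geodesic V E y x z))"

definition maximally_distant :: "'a set \<Rightarrow> ('a \<Rightarrow> 'a \<Rightarrow> bool) \<Rightarrow> 'a \<Rightarrow> 'a \<Rightarrow> bool" where
  "maximally_distant V E u v \<longleftrightarrow> (\<forall>w. E u w \<longrightarrow> gdist V E w v \<le> gdist V E u v)"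

definition MMD :: "'a set \<Rightarrow> ('a \<Rightarrow> 'a \<Rightarrow> bool) \<Rightarrow> 'a \<Rightarrow> 'a \<Rightarrow> bool" where
  "MMD V E u v \<longleftrightarrow> u \<in> V \<and> v \<in> V \<and> u \<noteq> v \<and>
     maximally_distant V E u v \<and> maximally_distant V E v u"

definition SR_verts :: "'a set \<Rightarrow> ('a \<Rightarrow> 'a \<Rightarrow> bool) \<Rightarrow> 'a set" where
  "SR_verts V E = {x. \<exists>y. MMD V E x y}"

definition SR_edge :: "'a set \<Rightarrow> ('a \<Rightarrow> 'a \<Rightarrow> bool) \<Rightarrow> 'a \<Rightarrow> 'a \<Rightarrow> bool" where
  "SR_edge V E = MMD V E"

definition graph_iso :: "'a set \<Rightarrow> ('a \<Rightarrow> 'a \<Rightarrow> bool) \<Rightarrow> 'b set \<Rightarrow> ('b \<Rightarrow> 'b \<Rightarrow> bool) \<Rightarrow> bool" where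
  "graph_iso V E W F \<longleftrightarrow> (\<exists>f. bij_betw f V W \<and> (\<forall>x\<in>V. \<forall>y\<in>V. E x y \<longleftrightarrow> F (f x) (f y)))"

definition dunion_V :: "'a set \<Rightarrow> 'b set \<Rightarrow> ('a + 'b) set" where
  "dunion_V V W = Inl ` V \<union> Inr ` W"

fun dunion_E :: "('a \<Rightarrow> 'a \<Rightarrow> bool) \<Rightarrow> ('b \<Rightarrow> 'b \<Rightarrow> bool) \<Rightarrow> ('a + 'b) \<Rightarrow> ('a + 'b) \<Rightarrow> bool" where
  "dunion_E E F (Inl x) (Inl y) = E x y"
| "dunion_E E F (Inr x) (Inr y) = F x y"
| "dunion_E E F _ _ = False"

fun join_E :: "'a set \<Rightarrow> ('a \<Rightarrow> 'a \<Rightarrow> bool) \<Rightarrow> 'b set \<Rightarrow> ('b \<Rightarrow> 'b \<Rightarrow> bool) \<Rightarrow> ('a + 'b) \<Rightarrow> ('a + 'b) \<Rightarrow> bool" where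
  "join_E V E W F (Inl x) (Inl y) = E x y"
| "join_E V E W F (Inr x) (Inr y) = F x y"
| "join_E V E W F (Inl x) (Inr y) = (x \<in> V \<and> y \<in> W)"
| "join_E V E W F (Inr x) (Inl y) = (x \<in> W \<and> y \<in> V)"

text \<open>a K_2 \<union> b K_1: vertices (i,j) with i<a, j::bool forming the copies of K_2,
  and k<b isolated.\<close>
definition aK2_bK1_V :: "nat \<Rightarrow> nat \<Rightarrow> ((nat \<times> bool) + nat) set" where
  "aK2_bK1_V a b = dunion_V ({..<a} \<times> UNIV) {..<b}"

definition aK2_bK1_E :: "((nat \<times> bool) + nat) \<Rightarrow> ((nat \<times> bool) + nat) \<Rightarrow> bool" where
  "aK2_bK1_E = dunion_E (\<lambda>(i,j) (i',j'). i = i' \<and> j \<noteq> j') (\<lambda>_ _. False)"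

definition target_V :: "nat \<Rightarrow> nat \<Rightarrow> (unit + ((nat \<times> bool) + nat)) set" where
  "target_V a b = dunion_V {()} (aK2_bK1_V a b)"

definition target_E :: "nat \<Rightarrow> nat \<Rightarrow> (unit + ((nat \<times> bool) + nat)) \<Rightarrow> (unit + ((nat \<times> bool) + nat)) \<Rightarrow> bool" where
  "target_E a b = join_E {()} (\<lambda>_ _. False) (aK2_bK1_V a b) aK2_bK1_E"

text \<open>State: Maker's set M, Breaker's set B,
  and n = number of not-yet-chosen vertices. The game ends when all vertices are
  chosen; Maker wins iff his vertices contain a strong resolving set.
  maker_wins ... n M B True: Maker to move, and Maker has a winning strategy.\<close>
fun maker_wins :: "'a set \<Rightarrow> ('a \<Rightarrow> 'a \<Rightarrow> bool) \<Rightarrow> nat \<Rightarrow> 'a set \<Rightarrow> 'a set \<Rightarrow> bool \<Rightarrow> bool" where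
  "maker_wins V E 0 M B t = (\<exists>S\<subseteq>M. strong_resolving_set V E S)"
| "maker_wins V E (Suc n) M B True =
     (\<exists>v\<in>V - (M \<union> B). maker_wins V E n (insert v M) B False)"
| "maker_wins V E (Suc n) M B False =
     (\<forall>v\<in>V - (M \<union> B). maker_wins V E n M (insert v B) True)"

definition maker_wins_M_game :: "'a set \<Rightarrow> ('a \<Rightarrow> 'a \<Rightarrow> bool) \<Rightarrow> bool" where
  "maker_wins_M_game V E = maker_wins V E (card V) {} {} True"

definition maker_wins_B_game :: "'a set \<Rightarrow> ('a \<Rightarrow> 'a \<Rightarrow> bool) \<Rightarrow> bool" where
  "maker_wins_B_game V E = maker_wins V E (card V) {} {} False"

text \<open>Finite games of perfect information are determined: Breaker has a winning
  strategy iff Maker does not.\<close>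
definition breaker_wins_M_game :: "'a set \<Rightarrow> ('a \<Rightarrow> 'a \<Rightarrow> bool) \<Rightarrow> bool" where
  "breaker_wins_M_game V E = (\<not> maker_wins_M_game V E)"

definition breaker_wins_B_game :: "'a set \<Rightarrow> ('a \<Rightarrow> 'a \<Rightarrow> bool) \<Rightarrow> bool" where
  "breaker_wins_B_game V E = (\<not> maker_wins_B_game V E)"

datatype outcome = Out_M | Out_B | Out_N | Out_P

definition O_SR :: "'a set \<Rightarrow> ('a \<Rightarrow> 'a \<Rightarrow> bool) \<Rightarrow> outcome" where
  "O_SR V E =
    (if maker_wins_M_game V E \<and> maker_wins_B_game V E then Out_M
     else if breaker_wins_M_game V E \<and> breaker_wins_B_game V E then Out_B
     else if maker_wins_M_game V E \<and> breaker_wins_B_game V E then Out_N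
     else Out_P)"

end

(* A set of vertices is strong resolving exactly when it is a vertex cover of G_SR
   (Oellermann and Peters-Fransen): an MMD pair u, v is strongly resolved only by u or v, while
   any two distinct vertices are strongly resolved by either end of a suitable MMD pair.
   If G_SR is K_1 + (a K_2 \<union> b K_1) with centre c, every set containing c and one end of each
   K_2 is a vertex cover. In the M-game Maker claims c and then answers a Breaker move in a K_2
   with its other end. In the B-game Breaker claims c; as c has 2a + b \<ge> 2 neighbours in G_SR,
   after Maker's reply Breaker claims one of them that is still free, and the G_SR-edge from c
   to it can no longer be covered by Maker. *)

theory Submission
  imports Defs
begin

lemma is_walk_nonempty: "is_walk E xs \<Longrightarrow> xs \<noteq> []"
  by (cases xs) auto

lemma is_walk_append:
  "is_walk E xs \<Longrightarrow> is_walk E ys \<Longrightarrow> last xs = hd ys \<Longrightarrow> is_walk E (xs @ tl ys)"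
  by (induction E xs rule: is_walk.induct) (auto simp: list.collapse[OF is_walk_nonempty])

lemma is_walk_rev: "(\<And>x y. E x y \<Longrightarrow> E y x) \<Longrightarrow> is_walk E xs \<Longrightarrow> is_walk E (rev xs)"
proof (induction E xs rule: is_walk.induct)
  case (3 E x y xs)
  then have "is_walk E (rev (y # xs) @ tl [y, x])"
    by (intro is_walk_append) auto
  then show ?case by simp
qed simp_all

lemma MMD_sym: "MMD V E u v \<Longrightarrow> MMD V E v u"
  unfolding MMD_def by auto

lemma MMD_in_SR_verts: "MMD V E u v \<Longrightarrow> u \<in> SR_verts V E"
  unfolding SR_verts_def by blast

context
  fixes V :: "'a set" and E :: "'a \<Rightarrow> 'a \<Rightarrow> bool"
  assumes connected: "connected_graph V E"
begin

lemma finite_vertices: "finite V"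
  using connected unfolding connected_graph_def simple_graph_def by blast

lemma adj_in_vertices: "E x y \<Longrightarrow> x \<in> V \<and> y \<in> V"
  using connected unfolding connected_graph_def simple_graph_def by blast

lemma adj_sym: "E x y \<Longrightarrow> E y x"
  using connected unfolding connected_graph_def simple_graph_def by blast

lemma shortest_walk_exists:
  assumes "x \<in> V" "y \<in> V"
  shows "\<exists>xs. walk_between V E x y xs \<and> length xs = Suc (gdist V E x y)"
proof -
  obtain xs where xs: "walk_between V E x y xs"
    using connected assms unfolding connected_graph_def by blast
  then have "xs \<noteq> []"
    using is_walk_nonempty unfolding walk_between_def by blast
  with xs have "\<exists>n xs. walk_between V E x y xs \<and> length xs = Suc n"
    by (intro exI[of _ "length xs - 1"] exI[of _ xs]) auto
  then show ?thesis
    unfolding gdist_def by (rule LeastI_ex)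
qed

lemma gdist_le_walk_length:
  assumes "walk_between V E x y xs"
  shows "gdist V E x y \<le> length xs - 1"
proof -
  have "xs \<noteq> []"
    using assms is_walk_nonempty unfolding walk_between_def by blast
  with assms show ?thesis
    unfolding gdist_def by (intro Least_le) auto
qed

lemma gdist_triangle:
  assumes "x \<in> V" "y \<in> V" "z \<in> V"
  shows "gdist V E x z \<le> gdist V E x y + gdist V E y z"
proof -
  obtain xs where xs: "walk_between V E x y xs" "length xs = Suc (gdist V E x y)"
    using shortest_walk_exists assms by blast
  obtain ys where ys: "walk_between V E y z ys" "length ys = Suc (gdist V E y z)"
    using shortest_walk_exists assms by blast
  obtain y' ys' where ys_Cons: "ys = y' # ys'"
    using ys by (cases ys) auto
  have "walk_between V E x z (xs @ tl ys)"
    using xs ys ys_Cons is_walk_append[of E xs ys] is_walk_nonempty[of E xs]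
    unfolding walk_between_def by (cases ys') auto
  from gdist_le_walk_length[OF this] show ?thesis
    using xs ys ys_Cons by simp
qed

lemma gdist_sym:
  assumes "x \<in> V" "y \<in> V"
  shows "gdist V E x y = gdist V E y x"
proof -
  have "gdist V E x y \<le> gdist V E y x" if xy: "x \<in> V" "y \<in> V" for x y
  proof -
    obtain xs where xs: "walk_between V E y x xs" "length xs = Suc (gdist V E y x)"
      using shortest_walk_exists xy by blast
    then have "walk_between V E x y (rev xs)"
      using is_walk_rev[OF adj_sym] unfolding walk_between_def
      by (auto simp: hd_rev last_rev)
    from gdist_le_walk_length[OF this] show ?thesis
      using xs by simp
  qed
  with assms show ?thesis
    by (meson le_antisym)
qed

lemma gdist_eq_0_iff:
  assumes "x \<in> V" "y \<in> V"
  shows "gdist V E x y = 0 \<longleftrightarrow> x = y"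
proof
  assume "gdist V E x y = 0"
  then obtain xs where "walk_between V E x y xs" "length xs = Suc 0"
    using shortest_walk_exists assms by fastforce
  then show "x = y"
    unfolding walk_between_def by (cases xs) auto
next
  assume "x = y"
  then show "gdist V E x y = 0"
    using assms gdist_le_walk_length[of x x "[x]"] unfolding walk_between_def by auto
qed

lemma gdist_adj_le_1: "E x y \<Longrightarrow> gdist V E x y \<le> 1"
  using gdist_le_walk_length[of x y "[x, y]"] adj_in_vertices
  unfolding walk_between_def by auto

lemma gdist_step_towards:
  assumes "x \<in> V" "y \<in> V" "x \<noteq> y"
  obtains w where "E x w" "gdist V E w y + 1 = gdist V E x y"
proof -
  obtain xs where xs: "walk_between V E x y xs" "length xs = Suc (gdist V E x y)"
    using shortest_walk_exists assms by blast
  with assms obtain w ws where xs_Cons: "xs = x # w # ws"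
    unfolding walk_between_def by (cases xs rule: remdups_adj.cases) auto
  then have xw: "E x w"
    using xs unfolding walk_between_def by simp
  have "walk_between V E w y (w # ws)"
    using xs xs_Cons unfolding walk_between_def by simp
  then have "gdist V E w y + 1 \<le> gdist V E x y"
    using gdist_le_walk_length xs xs_Cons by fastforce
  moreover have "gdist V E x y \<le> gdist V E x w + gdist V E w y"
    using gdist_triangle assms adj_in_vertices[OF xw] by blast
  moreover have "gdist V E x w \<le> 1"
    using gdist_adj_le_1 xw by blast
  ultimately show ?thesis
    using that xw by simp
qed

text \<open>If \<open>z \<noteq> u\<close>, the neighbour of \<open>u\<close> on a geodesic towards \<open>z\<close> would be farther from \<open>v\<close>
  than \<open>u\<close> is.\<close>

lemma MMD_geodesic_endpoint:
  assumes uv: "MMD V E u v" and z: "z \<in> V" and geodesic: "on_geodesic V E u v z"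
  shows "z = u"
proof (rule ccontr)
  assume "z \<noteq> u"
  have u: "u \<in> V" and v: "v \<in> V"
    using uv unfolding MMD_def by auto
  obtain w where uw: "E u w" and w_closer: "gdist V E w z + 1 = gdist V E u z"
    using gdist_step_towards[OF u z] \<open>z \<noteq> u\<close> by metis
  have w: "w \<in> V"
    using adj_in_vertices uw by blast
  have "gdist V E w v \<le> gdist V E u v"
    using uv uw unfolding MMD_def maximally_distant_def by blast
  moreover have "gdist V E v z \<le> gdist V E v w + gdist V E w z"
    using gdist_triangle v w z by blast
  moreover have "gdist V E v w = gdist V E w v" "gdist V E v u = gdist V E u v"
    using gdist_sym u v w by auto
  ultimately show False
    using geodesic w_closer unfolding on_geodesic_def by linarith
qed

lemma strong_resolving_set_covers_MMD:
  assumes S: "strong_resolving_set V E S" and uv: "MMD V E u v"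
  shows "u \<in> S \<or> v \<in> S"
proof -
  have "u \<in> V" "v \<in> V" "u \<noteq> v"
    using uv unfolding MMD_def by auto
  then obtain z where z: "z \<in> S" "on_geodesic V E u v z \<or> on_geodesic V E v u z"
    using S unfolding strong_resolving_set_def by blast
  moreover have "z \<in> V"
    using S z unfolding strong_resolving_set_def by blast
  ultimately show ?thesis
    using MMD_geodesic_endpoint[OF uv] MMD_geodesic_endpoint[OF MMD_sym[OF uv]] by blast
qed

lemma exists_maximally_distant_beyond:
  assumes p: "p \<in> V" and q: "q \<in> V"
  obtains u where "u \<in> V" "on_geodesic V E q p u" "maximally_distant V E u p"
proof -
  define A where "A = {u \<in> V. on_geodesic V E q p u}"
  have "finite A"
    using finite_vertices unfolding A_def by auto
  moreover have "q \<in> A"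
    using q gdist_eq_0_iff unfolding A_def on_geodesic_def by auto
  ultimately obtain u where u: "u \<in> A" "gdist V E p u = Max (gdist V E p ` A)"
    using Max_in[of "gdist V E p ` A"] by fastforce
  then have u_max: "gdist V E p u' \<le> gdist V E p u" if "u' \<in> A" for u'
    using \<open>finite A\<close> that by simp
  have "gdist V E w p \<le> gdist V E u p" if uw: "E u w" for w
  proof (rule ccontr)
    assume farther: "\<not> ?thesis"
    have w: "w \<in> V" and "u \<in> V"
      using adj_in_vertices uw by auto
    then have "gdist V E p w \<le> gdist V E p u + gdist V E u w"
      and "gdist V E q w \<le> gdist V E q u + gdist V E u w"
      and "gdist V E p w \<le> gdist V E p q + gdist V E q w"
      and sym_w: "gdist V E p w = gdist V E w p" and sym_u: "gdist V E p u = gdist V E u p"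
      using gdist_triangle gdist_sym p q by auto
    moreover have "gdist V E u w \<le> 1"
      using gdist_adj_le_1 uw by blast
    moreover have "on_geodesic V E q p u"
      using u unfolding A_def by blast
    ultimately have "on_geodesic V E q p w"
      using farther unfolding on_geodesic_def by linarith
    then have "gdist V E p w \<le> gdist V E p u"
      using u_max w unfolding A_def by blast
    then show False
      using farther sym_w sym_u by linarith
  qed
  then show ?thesis
    using that u unfolding A_def maximally_distant_def by blast
qed

text \<open>Extend a \<open>y\<close>--\<open>x\<close> geodesic beyond \<open>x\<close> to a vertex \<open>u\<close> maximally distant from \<open>y\<close>,
  then a \<open>u\<close>--\<open>y\<close> geodesic beyond \<open>y\<close> to a vertex \<open>v\<close> maximally distant from \<open>u\<close>.\<close>

lemma MMD_pair_beyond: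
  assumes x: "x \<in> V" and y: "y \<in> V" and "x \<noteq> y"
  obtains u v where "MMD V E u v" "on_geodesic V E x y u" "on_geodesic V E y x v"
proof -
  obtain u where u: "u \<in> V" and yxu: "on_geodesic V E x y u" and u_far: "maximally_distant V E u y"
    using exists_maximally_distant_beyond[OF y x] by blast
  obtain v where v: "v \<in> V" and uyv: "on_geodesic V E y u v" and v_far: "maximally_distant V E v u"
    using exists_maximally_distant_beyond[OF u y] by blast
  have d_uv: "gdist V E u v = gdist V E u y + gdist V E y v"
    using uyv unfolding on_geodesic_def by simp
  have "maximally_distant V E u v"
    unfolding maximally_distant_def
  proof (intro allI impI)
    fix w assume uw: "E u w"
    then have "gdist V E w v \<le> gdist V E w y + gdist V E y v"
      using gdist_triangle adj_in_vertices y v by blast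
    moreover have "gdist V E w y \<le> gdist V E u y"
      using u_far uw unfolding maximally_distant_def by blast
    ultimately show "gdist V E w v \<le> gdist V E u v"
      using d_uv by linarith
  qed
  moreover have "u \<noteq> v"
  proof
    assume "u = v"
    then have "gdist V E u y = 0"
      using d_uv gdist_eq_0_iff[OF u u] by simp
    then have "u = y"
      using gdist_eq_0_iff[OF u y] by simp
    then have "gdist V E y x = 0"
      using yxu gdist_eq_0_iff[OF y y] unfolding on_geodesic_def by simp
    then show False
      using gdist_eq_0_iff[OF y x] \<open>x \<noteq> y\<close> by simp
  qed
  moreover have "on_geodesic V E y x v"
  proof -
    have "gdist V E x v \<le> gdist V E x y + gdist V E y v"
      and "gdist V E u v \<le> gdist V E u x + gdist V E x v"
      using gdist_triangle x y u v by blast+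
    moreover have "gdist V E u y = gdist V E y u" "gdist V E u x = gdist V E x u"
      and "gdist V E x y = gdist V E y x"
      using gdist_sym x y u by blast+
    ultimately show ?thesis
      using yxu d_uv unfolding on_geodesic_def by linarith
  qed
  ultimately show ?thesis
    using that u v v_far yxu unfolding MMD_def by blast
qed

lemma MMD_cover_imp_strong_resolving_set:
  assumes S: "S \<subseteq> V" and cover: "\<And>u v. MMD V E u v \<Longrightarrow> u \<in> S \<or> v \<in> S"
  shows "strong_resolving_set V E S"
  unfolding strong_resolving_set_def
proof (intro conjI S ballI impI)
  fix x y assume "x \<in> V" "y \<in> V" "x \<noteq> y"
  then obtain u v where "MMD V E u v" "on_geodesic V E x y u" "on_geodesic V E y x v"
    by (rule MMD_pair_beyond)
  then show "\<exists>z\<in>S. on_geodesic V E x y z \<or> on_geodesic V E y x z"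
    using cover by blast
qed

theorem strong_resolving_set_iff_MMD_cover:
  "strong_resolving_set V E S \<longleftrightarrow> S \<subseteq> V \<and> (\<forall>u v. MMD V E u v \<longrightarrow> u \<in> S \<or> v \<in> S)"
proof
  show "strong_resolving_set V E S \<Longrightarrow> S \<subseteq> V \<and> (\<forall>u v. MMD V E u v \<longrightarrow> u \<in> S \<or> v \<in> S)"
    using strong_resolving_set_covers_MMD unfolding strong_resolving_set_def by blast
  show "S \<subseteq> V \<and> (\<forall>u v. MMD V E u v \<longrightarrow> u \<in> S \<or> v \<in> S) \<Longrightarrow> strong_resolving_set V E S"
    using MMD_cover_imp_strong_resolving_set by blast
qed

end

lemma card_free_after_move:
  assumes "finite V" "v \<in> V - (M \<union> B)" "card (V - (M \<union> B)) = Suc n"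
  shows "card (V - (insert v M \<union> B)) = n" "card (V - (M \<union> insert v B)) = n"
proof -
  have "V - (insert v M \<union> B) = (V - (M \<union> B)) - {v}" "V - (M \<union> insert v B) = (V - (M \<union> B)) - {v}"
    by auto
  then show "card (V - (insert v M \<union> B)) = n" "card (V - (M \<union> insert v B)) = n"
    using assms by (simp_all add: card_Diff_singleton)
qed

lemma free_vertex_exists:
  assumes "card (V - (M \<union> B)) = Suc n"
  obtains v where "v \<in> V - (M \<union> B)"
proof -
  have "V - (M \<union> B) \<noteq> {}"
    using assms by force
  then show ?thesis
    using that by blast
qed

lemma maker_loses_if_breaker_claims_transversal:
  assumes "finite V" and transversal: "\<And>S. strong_resolving_set V E S \<Longrightarrow> S \<inter> X \<noteq> {}"
  shows "card (V - (M \<union> B)) = n \<Longrightarrow> X \<subseteq> B \<Longrightarrow> X \<inter> M = {} \<Longrightarrow> \<not> maker_wins V E n M B t"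
proof (induction n arbitrary: M B t)
  case 0
  then show ?case
    using transversal by fastforce
next
  case (Suc n)
  show ?case
  proof (cases t)
    case True
    have "\<not> maker_wins V E n (insert v M) B False" if "v \<in> V - (M \<union> B)" for v
      using Suc.IH[of "insert v M" B False] card_free_after_move[OF \<open>finite V\<close> that] Suc.prems that
      by auto
    then show ?thesis
      using True by auto
  next
    case False
    obtain v where v: "v \<in> V - (M \<union> B)"
      using free_vertex_exists Suc.prems(1) by blast
    then have "\<not> maker_wins V E n M (insert v B) True"
      using Suc.IH[of M "insert v B" True] card_free_after_move[OF \<open>finite V\<close> v] Suc.prems
      by auto
    then show ?thesis
      using False v by auto
  qed
qed

text \<open>The pairs are \<open>{p i True, p i False}\<close> for \<open>i < a\<close>. The invariant of Maker's pairing
  strategy: every pair is hit by Maker or still untouched.\<close>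

definition pairs_hit_or_free :: "nat \<Rightarrow> (nat \<Rightarrow> bool \<Rightarrow> 'a) \<Rightarrow> 'a set \<Rightarrow> 'a set \<Rightarrow> bool" where
  "pairs_hit_or_free a p M B \<longleftrightarrow> (\<forall>i<a. (\<exists>j. p i j \<in> M) \<or> (\<forall>j. p i j \<notin> M \<union> B))"

lemma pairs_hit_or_free_insert_Maker:
  "pairs_hit_or_free a p M B \<Longrightarrow> pairs_hit_or_free a p (insert v M) B"
  unfolding pairs_hit_or_free_def by auto

lemma pairs_hit_or_free_answer_in_pair:
  assumes "pairs_hit_or_free a p M B" and inj: "inj_on (case_prod p) ({..<a} \<times> UNIV)"
    and "i < a" and untouched: "\<forall>j'. p i j' \<notin> M \<union> B"
  shows "pairs_hit_or_free a p (insert (p i (\<not> j)) M) (insert (p i j) B)"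
  unfolding pairs_hit_or_free_def
proof (intro allI impI)
  fix k assume "k < a"
  have "p k j' \<noteq> p i j''" if "k \<noteq> i" for j' j''
    using inj_onD[OF inj, of "(k, j')" "(i, j'')"] \<open>k < a\<close> \<open>i < a\<close> that by auto
  then show "(\<exists>j'. p k j' \<in> insert (p i (\<not> j)) M)
      \<or> (\<forall>j'. p k j' \<notin> insert (p i (\<not> j)) M \<union> insert (p i j) B)"
    using assms(1) \<open>k < a\<close> unfolding pairs_hit_or_free_def by (cases "k = i") auto
qed

lemma pairs_hit_or_free_insert_Breaker:
  assumes "pairs_hit_or_free a p M B" and "\<not> (\<exists>i<a. \<exists>j. w = p i j \<and> (\<forall>j'. p i j' \<notin> M \<union> B))"
  shows "pairs_hit_or_free a p M (insert w B)"
  using assms unfolding pairs_hit_or_free_def by blast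

lemma pairs_hit_when_board_full:
  assumes "V \<subseteq> M \<union> B" "\<And>i j. i < a \<Longrightarrow> p i j \<in> V" "pairs_hit_or_free a p M B"
  shows "\<forall>i<a. \<exists>j. p i j \<in> M"
  using assms unfolding pairs_hit_or_free_def by blast

lemma pairing_answer:
  fixes p :: "nat \<Rightarrow> bool \<Rightarrow> 'a"
  assumes pairs_V: "\<And>i j. i < a \<Longrightarrow> p i j \<in> V" and inj: "inj_on (case_prod p) ({..<a} \<times> UNIV)"
    and inv: "pairs_hit_or_free a p M B"
  obtains (board_full) "V \<subseteq> M \<union> insert w B" "pairs_hit_or_free a p M (insert w B)"
    | (answer) v where "v \<in> V - (M \<union> insert w B)" "pairs_hit_or_free a p (insert v M) (insert w B)"
proof (cases "\<exists>i<a. \<exists>j. w = p i j \<and> (\<forall>j'. p i j' \<notin> M \<union> B)")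
  case True
  then obtain i j where i: "i < a" and w: "w = p i j" and untouched: "\<forall>j'. p i j' \<notin> M \<union> B"
    by blast
  have "p i (\<not> j) \<noteq> p i j"
    using inj_onD[OF inj, of "(i, \<not> j)" "(i, j)"] i by auto
  then have "p i (\<not> j) \<in> V - (M \<union> insert w B)"
    using pairs_V i untouched w by auto
  then show ?thesis
    using answer pairs_hit_or_free_answer_in_pair[OF inv inj i untouched] w by blast
next
  case False
  then have inv': "pairs_hit_or_free a p M (insert w B)"
    using pairs_hit_or_free_insert_Breaker[OF inv] by blast
  show ?thesis
  proof (cases "V \<subseteq> M \<union> insert w B")
    case True
    then show ?thesis
      using board_full inv' by blast
  next
    case False
    then obtain v where "v \<in> V - (M \<union> insert w B)"
      by blast
    then show ?thesis
      using answer pairs_hit_or_free_insert_Maker[OF inv'] by blast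
  qed
qed

lemma maker_wins_by_pairing:
  fixes p :: "nat \<Rightarrow> bool \<Rightarrow> 'a"
  assumes fin: "finite V" and pairs_V: "\<And>i j. i < a \<Longrightarrow> p i j \<in> V"
    and inj: "inj_on (case_prod p) ({..<a} \<times> UNIV)"
  shows "\<lbrakk>\<And>M'. M \<subseteq> M' \<Longrightarrow> M' \<subseteq> V \<Longrightarrow> \<forall>i<a. \<exists>j. p i j \<in> M' \<Longrightarrow> \<exists>S\<subseteq>M'. strong_resolving_set V E S;
      M \<subseteq> V; pairs_hit_or_free a p M B; card (V - (M \<union> B)) = n\<rbrakk>
    \<Longrightarrow> maker_wins V E n M B False"
proof (induction n arbitrary: M B rule: less_induct)
  case (less n)
  note wins = less.prems(1) and M_V = less.prems(2) and inv = less.prems(3)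
  show ?case
  proof (cases n)
    case 0
    then have "V \<subseteq> M \<union> B"
      using fin less.prems(4) by auto
    then show ?thesis
      using wins M_V pairs_hit_when_board_full[OF _ pairs_V inv] \<open>n = 0\<close> by simp
  next
    case (Suc m)
    have "maker_wins V E m M (insert w B) True" if w: "w \<in> V - (M \<union> B)" for w
    proof -
      have card_m: "card (V - (M \<union> insert w B)) = m"
        using card_free_after_move(2)[OF fin w] less.prems(4) Suc by blast
      consider (board_full) "V \<subseteq> M \<union> insert w B" "pairs_hit_or_free a p M (insert w B)"
        | (answer) v where "v \<in> V - (M \<union> insert w B)" "pairs_hit_or_free a p (insert v M) (insert w B)"
        by (rule pairing_answer[OF pairs_V inj inv])
      then show ?thesis
      proof cases
        case board_full
        then have "V - (M \<union> insert w B) = {}"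
          by blast
        then have "m = 0"
          using card_m by (metis card.empty)
        then show ?thesis
          using wins M_V pairs_hit_when_board_full[OF board_full(1) pairs_V board_full(2)] by simp
      next
        case (answer v)
        then obtain k where k: "m = Suc k"
          using card_m fin by (metis card_0_eq empty_iff finite_Diff not0_implies_Suc)
        have "maker_wins V E k (insert v M) (insert w B) False"
        proof (rule less.IH)
          show "k < n" "insert v M \<subseteq> V"
            using Suc k M_V answer by auto
          show "card (V - (insert v M \<union> insert w B)) = k"
            using card_free_after_move(1)[OF fin answer(1)] card_m k by blast
        qed (use wins answer in auto)
        then show ?thesis
          using k answer by auto
      qed
    qed
    then show ?thesis
      using Suc by simp
  qed
qed

lemma maker_wins_M_game_if_MMD_star_with_matching:
  fixes p :: "nat \<Rightarrow> bool \<Rightarrow> 'a"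
  assumes conn: "connected_graph V E" and c: "c \<in> V"
    and pairs_V: "\<And>i j. i < a \<Longrightarrow> p i j \<in> V" and inj: "inj_on (case_prod p) ({..<a} \<times> UNIV)"
    and MMD_pairs: "\<And>x y. MMD V E x y \<Longrightarrow> x = c \<or> y = c \<or> (\<exists>i<a. \<exists>j. x = p i j \<and> y = p i (\<not> j))"
  shows "maker_wins_M_game V E"
proof -
  have fin: "finite V"
    using finite_vertices[OF conn] .
  obtain n where n: "card V = Suc n"
    using c fin by (cases "card V") auto
  have "maker_wins V E n {c} {} False"
  proof (rule maker_wins_by_pairing[OF fin pairs_V inj])
    fix M' assume c_M': "{c} \<subseteq> M'" and M'_V: "M' \<subseteq> V" and hit: "\<forall>i<a. \<exists>j. p i j \<in> M'"
    have "x \<in> M' \<or> y \<in> M'" if xy: "MMD V E x y" for x y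
    proof -
      consider "x = c \<or> y = c" | i j where "i < a" "x = p i j" "y = p i (\<not> j)"
        using MMD_pairs[OF xy] by blast
      then show ?thesis
      proof cases
        case (2 i j)
        then obtain j' where "p i j' \<in> M'"
          using hit by blast
        then show ?thesis
          using 2 by (cases "j' = j") auto
      qed (use c_M' in auto)
    qed
    then show "\<exists>S\<subseteq>M'. strong_resolving_set V E S"
      using strong_resolving_set_iff_MMD_cover[OF conn] M'_V by blast
  next
    show "{c} \<subseteq> V" "pairs_hit_or_free a p {c} {}" "card (V - ({c} \<union> {})) = n"
      using c fin n unfolding pairs_hit_or_free_def by auto
  qed
  then have "maker_wins V E (Suc n) {} {} True"
    using c by auto
  then show ?thesis
    unfolding maker_wins_M_game_def n .
qed

lemma breaker_wins_B_game_if_two_MMD_partners: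
  assumes conn: "connected_graph V E" and "MMD V E c w\<^sub>1" "MMD V E c w\<^sub>2" "w\<^sub>1 \<noteq> w\<^sub>2"
  shows "\<not> maker_wins_B_game V E"
proof -
  have fin: "finite V"
    using finite_vertices[OF conn] .
  have c: "c \<in> V" and w1: "w\<^sub>1 \<in> V - ({} \<union> {c})"
    using assms unfolding MMD_def by auto
  obtain n where n: "card V = Suc n"
    using c fin by (cases "card V") auto
  have card_n: "card (V - ({} \<union> {c})) = n"
    using n c fin by simp
  then obtain m where m: "n = Suc m"
    using w1 fin by (metis card_0_eq empty_iff finite_Diff not0_implies_Suc)
  have "\<not> maker_wins V E m {u} {c} False" if u: "u \<in> V - ({} \<union> {c})" for u
  proof -
    obtain w where cw: "MMD V E c w" and "w \<noteq> u"
      using assms by metis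
    then have w: "w \<in> V - ({u} \<union> {c})"
      unfolding MMD_def by auto
    have card_m: "card (V - ({u} \<union> {c})) = m"
      using card_free_after_move(1)[OF fin u] card_n m by simp
    then obtain k where k: "m = Suc k"
      using w fin by (metis card_0_eq empty_iff finite_Diff not0_implies_Suc)
    have "\<not> maker_wins V E k {u} (insert w {c}) True"
    proof (rule maker_loses_if_breaker_claims_transversal[OF fin, where X = "{c, w}"])
      show "S \<inter> {c, w} \<noteq> {}" if "strong_resolving_set V E S" for S
        using that cw strong_resolving_set_iff_MMD_cover[OF conn] by blast
      show "card (V - ({u} \<union> insert w {c})) = k"
        using card_free_after_move(2)[OF fin w] card_m k by simp
    qed (use u w in auto)
    then show ?thesis
      using k w by auto
  qed
  then have "\<not> maker_wins V E n {} {c} True"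
    using m by auto
  then show ?thesis
    unfolding maker_wins_B_game_def n using c by auto
qed

lemma graph_iso_sym:
  assumes "graph_iso V E W F"
  shows "graph_iso W F V E"
proof -
  obtain f where f: "bij_betw f V W" and edges: "\<forall>x\<in>V. \<forall>y\<in>V. E x y \<longleftrightarrow> F (f x) (f y)"
    using assms unfolding graph_iso_def by blast
  have "bij_betw (inv_into V f) W V"
    using f by (rule bij_betw_inv_into)
  moreover have "\<forall>x\<in>W. \<forall>y\<in>W. F x y \<longleftrightarrow> E (inv_into V f x) (inv_into V f y)"
    using edges f calculation by (auto simp: bij_betw_def bij_betw_apply f_inv_into_f)
  ultimately show ?thesis
    unfolding graph_iso_def by blast
qed

lemma dunion_V_eq_Plus: "dunion_V V W = V <+> W"
  by (simp add: dunion_V_def Plus_def)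

lemma card_target_V: "card (target_V a b) = Suc (2 * a + b)"
  by (simp add: target_V_def aK2_bK1_V_def dunion_V_eq_Plus card_Plus card_cartesian_product)

lemma target_E_cases:
  assumes "z \<in> target_V a b" "z' \<in> target_V a b" "target_E a b z z'"
  shows "z = Inl () \<or> z' = Inl () \<or> (\<exists>i<a. \<exists>j. z = Inr (Inl (i, j)) \<and> z' = Inr (Inl (i, \<not> j)))"
  using assms
  by (auto simp: target_V_def target_E_def aK2_bK1_V_def aK2_bK1_E_def dunion_V_eq_Plus)

lemma target_E_center:
  assumes "z \<in> target_V a b" "z \<noteq> Inl ()"
  shows "target_E a b (Inl ()) z"
  using assms by (auto simp: target_V_def target_E_def dunion_V_eq_Plus)

lemma SR_graph_star_with_matching:
  fixes V :: "'a set"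
  assumes "graph_iso (SR_verts V E) (SR_edge V E) (target_V a b) (target_E a b)"
  obtains c and p :: "nat \<Rightarrow> bool \<Rightarrow> 'a" where
    "c \<in> SR_verts V E" "\<And>i j. i < a \<Longrightarrow> p i j \<in> SR_verts V E"
    "inj_on (case_prod p) ({..<a} \<times> UNIV)"
    "\<And>x y. MMD V E x y \<Longrightarrow> x = c \<or> y = c \<or> (\<exists>i<a. \<exists>j. x = p i j \<and> y = p i (\<not> j))"
    "\<And>w. w \<in> SR_verts V E - {c} \<Longrightarrow> MMD V E c w"
    "card (SR_verts V E) = Suc (2 * a + b)"
proof -
  obtain g where g: "bij_betw g (target_V a b) (SR_verts V E)"
    and edges: "\<forall>z\<in>target_V a b. \<forall>z'\<in>target_V a b. target_E a b z z' \<longleftrightarrow> MMD V E (g z) (g z')"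
    using graph_iso_sym[OF assms] unfolding graph_iso_def SR_edge_def by blast
  have center: "Inl () \<in> target_V a b"
    and pair: "\<And>i j. i < a \<Longrightarrow> Inr (Inl (i, j)) \<in> target_V a b"
    by (auto simp: target_V_def aK2_bK1_V_def dunion_V_eq_Plus)
  have g_inj: "z = z'" if "z \<in> target_V a b" "z' \<in> target_V a b" "g z = g z'" for z z'
    using bij_betw_imp_inj_on[OF g] that by (meson inj_onD)
  have g_surj: "\<exists>z\<in>target_V a b. x = g z" if "x \<in> SR_verts V E" for x
    using bij_betw_imp_surj_on[OF g] that by blast
  define c where "c = g (Inl ())"
  define p where "p i j = g (Inr (Inl (i, j)))" for i j
  show ?thesis
  proof
    show "c \<in> SR_verts V E" "\<And>i j. i < a \<Longrightarrow> p i j \<in> SR_verts V E"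
      using bij_betw_apply[OF g] center pair unfolding c_def p_def by auto
    show "inj_on (case_prod p) ({..<a} \<times> UNIV)"
      using g_inj pair unfolding p_def by (auto intro!: inj_onI)
    show "card (SR_verts V E) = Suc (2 * a + b)"
      using bij_betw_same_card[OF g] card_target_V by simp
  next
    fix x y assume xy: "MMD V E x y"
    then obtain z z' where z: "z \<in> target_V a b" "x = g z" and z': "z' \<in> target_V a b" "y = g z'"
      using g_surj MMD_in_SR_verts MMD_sym by metis
    then have "target_E a b z z'"
      using edges xy by blast
    then show "x = c \<or> y = c \<or> (\<exists>i<a. \<exists>j. x = p i j \<and> y = p i (\<not> j))"
      using target_E_cases[OF z(1) z'(1)] z z' unfolding c_def p_def by blast
  next
    fix w assume w: "w \<in> SR_verts V E - {c}"
    then obtain z where z: "z \<in> target_V a b" "w = g z" "z \<noteq> Inl ()"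
      using g_surj unfolding c_def by blast
    then show "MMD V E c w"
      using edges center target_E_center unfolding c_def by blast
  qed
qed

theorem mainTheorem10:
  fixes V :: "'a set" and E :: "'a \<Rightarrow> 'a \<Rightarrow> bool" and a b :: nat
  assumes "connected_graph V E"
    and "graph_iso (SR_verts V E) (SR_edge V E) (target_V a b) (target_E a b)"
    and "(a \<ge> 1) \<or> (a = 0 \<and> b \<ge> 2)"
  shows "O_SR V E = Out_N"
proof -
  obtain c and p :: "nat \<Rightarrow> bool \<Rightarrow> 'a" where c: "c \<in> SR_verts V E"
    and pairs: "\<And>i j. i < a \<Longrightarrow> p i j \<in> SR_verts V E" and inj: "inj_on (case_prod p) ({..<a} \<times> UNIV)"
    and MMD_pairs: "\<And>x y. MMD V E x y \<Longrightarrow> x = c \<or> y = c \<or> (\<exists>i<a. \<exists>j. x = p i j \<and> y = p i (\<not> j))"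
    and center: "\<And>w. w \<in> SR_verts V E - {c} \<Longrightarrow> MMD V E c w"
    and card_SR: "card (SR_verts V E) = Suc (2 * a + b)"
    using SR_graph_star_with_matching[OF assms(2)] by blast
  have SR_V: "SR_verts V E \<subseteq> V"
    unfolding SR_verts_def MMD_def by auto
  have "maker_wins_M_game V E"
    by (rule maker_wins_M_game_if_MMD_star_with_matching[OF assms(1) _ _ inj MMD_pairs])
      (use c pairs SR_V in auto)
  moreover have "2 \<le> card (SR_verts V E - {c})"
    using card_SR c assms(3) by (auto simp: card_Diff_singleton_if)
  then obtain w\<^sub>1 w\<^sub>2 where "w\<^sub>1 \<in> SR_verts V E - {c}" "w\<^sub>2 \<in> SR_verts V E - {c}" "w\<^sub>1 \<noteq> w\<^sub>2"
    by (metis card_le_Suc_iff insert_iff numeral_2_eq_2)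
  then have "\<not> maker_wins_B_game V E"
    using breaker_wins_B_game_if_two_MMD_partners[OF assms(1)] center by blast
  ultimately show ?thesis
    unfolding O_SR_def breaker_wins_M_game_def breaker_wins_B_game_def by simp
qed

end
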